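(* Let $P,D$ be positive integers with $P\mid D$ and $\bm{W}\in\mathbb{R}^{P\times P\times P}$. For $\bm{h},\bm{r},\bm{t}\in\mathbb{R}^D$, viewed as matrices in $\mathbb{R}^{(D/P)\times P}$ with columns $\bm{h}_{:l},\bm{r}_{:m},\bm{t}_{:n}\in\mathbb{R}^{D/P}$, define $f(\bm{h},\bm{r},\bm{t})=\sum_{l,m,n=1}^{P}\bm{W}_{lmn}\langle\bm{h}_{:l},\bm{r}_{:m},\bm{t}_{:n}\rangle$, where $\langle\bm{a},\bm{b},\bm{c}\rangle=\sum_{d}\bm{a}_d\bm{b}_d\bm{c}_d$. Let $\bm{S}\in\mathbb{R}^{P^2\times P^2}$ be the permutation matrix with $\bm{S}_{(i-1)P+j,(j-1)P+i}=1$ for $i,j=1,\dots,P$ and all other entries $0$. Then: (a) the model learns symmetry rules, i.e. $\exists\bm{r}\in\mathbb{R}^D,\bm{r}\neq0$ such that $\forall\bm{h},\bm{t}\in\mathbb{R}^D$, $f(\bm{h},\bm{r},\bm{t})=f(\bm{t},\bm{r},\bm{h})$, if and only if $\operatorname{rank}(\bm{W}_{(2)}^T-\bm{S}\bm{W}_{(2)}^T)<P$; (b) the model learns antisymmetry rules, i.e. $\exists\bm{r}\in\mathbb{R}^D,\bm{r}\neq0$ such that $\forall\bm{h},\bm{t}$, $f(\bm{h},\bm{r},\bm{t})=-f(\bm{t},\bm{r},\bm{h})$, if and only if $\operatorname{rank}(\bm{W}_{(2)}^T+\bm{S}\bm{W}_{(2)}^T)<P$; (c) the model learns inverse rules, i.e.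 $\forall\bm{r}_1\in\mathbb{R}^D\ \exists\bm{r}_2\in\mathbb{R}^D\ \forall\bm{h},\bm{t}\in\mathbb{R}^D$, $f(\bm{h},\bm{r}_1,\bm{t})=f(\bm{t},\bm{r}_2,\bm{h})$, if and only if $\operatorname{rank}(\bm{W}_{(2)}^T)=\operatorname{rank}([\bm{W}_{(2)}^T,\bm{S}\bm{W}_{(2)}^T])$.
   Context: $\bm{W}_{(2)}\in\mathbb{R}^{P\times P^2}$ is the mode-2 unfolding of $\bm{W}$: its entry in row $m$ and column $l+(n-1)P$ is $\bm{W}_{lmn}$. $[\bm{A},\bm{B}]$ denotes horizontal concatenation of matrices. *)

theory Defs
  imports Main "Jordan_Normal_Form.DL_Rank"
begin

text \<open>All indices are 0-based. A vector in R^D is a function nat => real of which only the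
entries 0..D-1 matter. Viewing h in R^D as a (D/P) x P matrix (column-major), the l-th column
has entries h (l * (D div P) + d) for d < D div P.\<close>

definition col :: "nat \<Rightarrow> nat \<Rightarrow> (nat \<Rightarrow> real) \<Rightarrow> nat \<Rightarrow> nat \<Rightarrow> real" where
  "col P D h l d = h (l * (D div P) + d)"

definition tri :: "nat \<Rightarrow> (nat \<Rightarrow> real) \<Rightarrow> (nat \<Rightarrow> real) \<Rightarrow> (nat \<Rightarrow> real) \<Rightarrow> real" where
  "tri K a b c = (\<Sum>d<K. a d * b d * c d)"

definition score :: "nat \<Rightarrow> nat \<Rightarrow> (nat \<Rightarrow> nat \<Rightarrow> nat \<Rightarrow> real)
    \<Rightarrow> (nat \<Rightarrow> real) \<Rightarrow> (nat \<Rightarrow> real) \<Rightarrow> (nat \<Rightarrow> real) \<Rightarrow> real" where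
  "score P D W h r t = (\<Sum>l<P. \<Sum>m<P. \<Sum>n<P.
      W l m n * tri (D div P) (col P D h l) (col P D r m) (col P D t n))"

text \<open>Transpose of the mode-2 unfolding W_(2): W_(2) has entry W l m n in row m, column
l + n*P (0-based), so its transpose is the (P^2) x P matrix with entry (l + n*P, m) = W l m n.\<close>
definition W2T :: "nat \<Rightarrow> (nat \<Rightarrow> nat \<Rightarrow> nat \<Rightarrow> real) \<Rightarrow> real mat" where
  "W2T P W = mat (P * P) P (\<lambda>(i, m). W (i mod P) m (i div P))"

definition Sperm :: "nat \<Rightarrow> real mat" where
  "Sperm P = mat (P * P) (P * P)
     (\<lambda>(a, b). if (\<exists>i<P. \<exists>j<P. a = i * P + j \<and> b = j * P + i) then 1 else 0)"

definition hcat :: "'a mat \<Rightarrow> 'a mat \<Rightarrow> 'a mat" where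
  "hcat A B = mat (dim_row A) (dim_col A + dim_col B)
     (\<lambda>(i, j). if j < dim_col A then A $$ (i, j) else B $$ (i, j - dim_col A))"

definition mrank :: "real mat \<Rightarrow> nat" where
  "mrank A = vec_space.rank (dim_row A) A"

end

theory Submission
  imports Defs
begin

text \<open>
  Write \<open>h\<^sub>d, r\<^sub>d, t\<^sub>d \<in> \<real>\<^sup>P\<close> for the rows of \<open>h, r, t\<close> viewed as \<open>(D/P) \<times> P\<close> matrices, and
  \<open>A = W2T P W\<close>, \<open>S = Sperm P\<close>. Expanding the trilinear products gives
  \<open>f(h,r,t) = \<Sum>\<^sub>d \<langle>t\<^sub>d \<otimes> h\<^sub>d, A r\<^sub>d\<rangle>\<close> and, since \<open>S\<close> swaps the two tensor factors,
  \<open>f(t,r,h) = \<Sum>\<^sub>d \<langle>t\<^sub>d \<otimes> h\<^sub>d, S A r\<^sub>d\<rangle>\<close>. Taking \<open>h, t\<close> to be indicator vectors isolates every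
  coefficient, so \<open>f(h,r,t) = \<plusminus>f(t,r',h)\<close> for all \<open>h, t\<close> iff \<open>A r\<^sub>d = \<plusminus>S A r'\<^sub>d\<close> for every \<open>d\<close>.
  Hence (anti)symmetry asks for a nonzero kernel vector of \<open>A \<mp> S A\<close>, i.e. column rank
  below \<open>P\<close>; inversion asks for \<open>range A \<subseteq> range (S A) = S (range A)\<close>, which, \<open>S\<close> being an
  involution, is equivalent to \<open>range (S A) \<subseteq> range A\<close>, i.e. to \<open>rank [A, S A] = rank A\<close>.
\<close>

lemma add_mult_less_mult:
  fixes l n K P :: nat
  assumes "l < K" and "n < P"
  shows "l + n * K < P * K"
proof -
  have "l + n * K < Suc n * K" using assms(1) by simp
  also have "\<dots> \<le> P * K" using assms(2) by (intro mult_le_mono1) simp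
  finally show ?thesis .
qed

lemma mult_add_eq_mult_add_iff:
  fixes K :: nat
  assumes "d < K" and "d' < K"
  shows "l' * K + d' = l * K + d \<longleftrightarrow> l' = l \<and> d' = d"
proof
  assume eq: "l' * K + d' = l * K + d"
  have "(l' * K + d') div K = l'" "(l' * K + d') mod K = d'"
    and "(l * K + d) div K = l" "(l * K + d) mod K = d"
    using assms by auto
  then show "l' = l \<and> d' = d" using eq by metis
qed auto

lemma pos_dvd_quotientE:
  fixes P D :: nat
  assumes "D > 0" and "P dvd D"
  obtains K where "D = P * K" and "K > 0" and "D div P = K"
  using assms by (metis dvd_div_mult_self mult.commute nonzero_mult_div_cancel_left
      mult_is_0 neq0_conv)

lemma involution_image_subset_iff:
  assumes "\<And>x. x \<in> U \<Longrightarrow> f (f x) = x"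
  shows "U \<subseteq> f ` U \<longleftrightarrow> f ` U \<subseteq> U"
  using assms by (auto simp: image_subset_iff) (metis image_eqI)

section \<open>Column rank and column space\<close>

lemma mult_unit_vec_eq_col:
  fixes A :: "'a::semiring_1 mat"
  assumes "A \<in> carrier_mat n nc" and "i < nc"
  shows "A *\<^sub>v unit_vec nc i = Matrix.col A i"
  using assms by (intro eq_vecI) (auto simp: row_def Matrix.col_def)

lemma mult_minus_mat_vec_eq_zero_iff:
  fixes A B :: "'a::comm_ring mat"
  assumes "A \<in> carrier_mat n nc" and "B \<in> carrier_mat n nc" and "v \<in> carrier_vec nc"
  shows "(A - B) *\<^sub>v v = 0\<^sub>v n \<longleftrightarrow> A *\<^sub>v v = B *\<^sub>v v"
  using assms by (auto simp: minus_mult_distrib_mat_vec vec_eq_iff)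

lemma mult_add_mat_vec_eq_zero_iff:
  fixes A B :: "'a::comm_ring mat"
  assumes "A \<in> carrier_mat n nc" and "B \<in> carrier_mat n nc" and "v \<in> carrier_vec nc"
  shows "(A + B) *\<^sub>v v = 0\<^sub>v n \<longleftrightarrow> A *\<^sub>v v = - (B *\<^sub>v v)"
  using assms by (auto simp: add_mult_distrib_mat_vec vec_eq_iff eq_neg_iff_add_eq_0)

lemma mult_mat_vec_image_mult:
  assumes "S \<in> carrier_mat n n" and "A \<in> carrier_mat n nc"
  shows "(*\<^sub>v) (S * A) ` carrier_vec nc = (*\<^sub>v) S ` (*\<^sub>v) A ` carrier_vec nc"
  using assms by (auto simp: image_image assoc_mult_mat_vec intro!: image_cong)

lemma (in vec_space) maximal_indpt_cols_exists:
  obtains S where "maximal S (\<lambda>T. T \<subseteq> set (cols A) \<and> lin_indpt T)"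
  using maximal_exists[of "\<lambda>T. T \<subseteq> set (cols A) \<and> lin_indpt T" "card (set (cols A))" "{}"]
  by (meson List.finite_set card_mono empty_iff empty_subsetI finite_lin_indpt2 rev_finite_subset)

lemma (in vec_space) non_distinct_cols_low_rank:
  assumes A: "A \<in> carrier_mat n nc" and "\<not> distinct (cols A)"
  shows "rank A < nc"
proof -
  obtain S where S: "maximal S (\<lambda>T. T \<subseteq> set (cols A) \<and> lin_indpt T)"
    by (rule maximal_indpt_cols_exists)
  then have "card S \<le> card (set (cols A))" by (simp add: card_mono maximal_def)
  moreover have "card (set (cols A)) < nc"
    using A assms(2) card_distinct card_length cols_length carrier_matD(2) nat_less_le by metis
  ultimately show ?thesis using rank_card_indpt[OF A S] by simp
qed

lemma (in vec_space) rank_lt_iff_nontrivial_kernel: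
  assumes A: "A \<in> carrier_mat n nc"
  shows "rank A < nc \<longleftrightarrow> (\<exists>v\<in>carrier_vec nc. v \<noteq> 0\<^sub>v nc \<and> A *\<^sub>v v = 0\<^sub>v n)"
proof (cases "distinct (cols A)")
  case True
  have "rank A < nc \<longleftrightarrow> lin_dep (set (cols A))"
    using lin_indpt_full_rank[OF A True] full_rank_lin_indpt[OF A _ True] rank_le_nc[OF A]
    by fastforce
  also have "\<dots> \<longleftrightarrow> (\<exists>v\<in>carrier_vec nc. v \<noteq> 0\<^sub>v nc \<and> A *\<^sub>v v = 0\<^sub>v n)"
    using lin_depE[OF A _ True] lin_depI[OF A _ _ _ True] by metis
  finally show ?thesis .
next
  case False
  then obtain i j where ij: "i \<noteq> j" "i < nc" "j < nc" "Matrix.col A i = Matrix.col A j"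
    using A by (auto simp: distinct_conv_nth)
  define v :: "'a vec" where "v = unit_vec nc i - unit_vec nc j"
  have "v \<in> carrier_vec nc" and "v $ i \<noteq> 0"
    using ij unfolding v_def by auto
  moreover have "A *\<^sub>v v = 0\<^sub>v n"
    using A ij unfolding v_def by (simp add: mult_minus_distrib_mat_vec mult_unit_vec_eq_col)
  ultimately show ?thesis
    using non_distinct_cols_low_rank[OF A False] ij(2) by (metis index_zero_vec(1))
qed

lemma hcat_carrier:
  assumes "A \<in> carrier_mat n nc" and "B \<in> carrier_mat n nc'"
  shows "hcat A B \<in> carrier_mat n (nc + nc')"
  using assms unfolding hcat_def by auto

lemma cols_hcat:
  assumes "dim_row B = dim_row A"
  shows "cols (hcat A B) = cols A @ cols B"
  using assms by (intro nth_equalityI) (auto simp: hcat_def nth_append Matrix.col_def)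

lemma (in vec_space) rank_hcat_eq_iff:
  assumes A: "A \<in> carrier_mat n nc" and B: "B \<in> carrier_mat n nc'"
  shows "rank (hcat A B) = rank A \<longleftrightarrow> set (cols B) \<subseteq> span (set (cols A))"
proof
  have cA: "set (cols A) \<subseteq> carrier_vec n" using A cols_dim by blast
  have cB: "set (cols B) \<subseteq> carrier_vec n" using B cols_dim by blast
  have cols_AB: "set (cols (hcat A B)) = set (cols A) \<union> set (cols B)"
    using A B by (simp add: cols_hcat)
  assume rank_eq: "rank (hcat A B) = rank A"
  show "set (cols B) \<subseteq> span (set (cols A))"
  proof (rule ccontr)
    assume "\<not> ?thesis"
    then obtain c where c: "c \<in> set (cols B)" "c \<notin> span (set (cols A))" by blast
    obtain S where S: "maximal S (\<lambda>T. T \<subseteq> set (cols A) \<and> lin_indpt T)"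
      by (rule maximal_indpt_cols_exists)
    have SA: "S \<subseteq> set (cols A)" "lin_indpt S" using S by (auto simp: maximal_def)
    have Sc: "S \<subseteq> carrier_vec n" using SA cA by blast
    have "c \<notin> span S" using c span_is_monotone[OF SA(1)] by blast
    moreover have "c \<notin> S" using \<open>c \<notin> span S\<close> in_own_span[OF Sc] by blast
    ultimately have "lin_indpt (insert c S)"
      using lin_dep_iff_in_span[OF Sc SA(2)] c cB by auto
    moreover have "insert c S \<subseteq> set (cols (hcat A B))" using cols_AB SA c by blast
    ultimately have "card (insert c S) \<le> rank A"
      using rank_ge_card_indpt[OF hcat_carrier[OF A B]] rank_eq by metis
    moreover have "finite S" using SA(1) finite_subset by blast
    ultimately show False using rank_card_indpt[OF A S] \<open>c \<notin> S\<close> by simp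
  qed
next
  assume B_in_span: "set (cols B) \<subseteq> span (set (cols A))"
  have cA: "set (cols A) \<subseteq> carrier_vec n" using A cols_dim by blast
  have "span (set (cols A) \<union> set (cols B)) = span (set (cols A))"
    using span_subsetI[OF cA] in_own_span[OF cA] B_in_span span_is_monotone[OF Un_upper1]
    by (metis Un_least subset_antisym)
  then show "rank (hcat A B) = rank A"
    using A B by (simp add: rank_def cols_hcat)
qed

lemma mrank_lt_iff_nontrivial_kernel:
  "mrank A < dim_col A \<longleftrightarrow>
     (\<exists>v\<in>carrier_vec (dim_col A). v \<noteq> 0\<^sub>v (dim_col A) \<and> A *\<^sub>v v = 0\<^sub>v (dim_row A))"
  unfolding mrank_def by (rule vec_space.rank_lt_iff_nontrivial_kernel) simp

lemma mrank_hcat_eq_iff_range_subset: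
  assumes A: "A \<in> carrier_mat n nc" and B: "B \<in> carrier_mat n nc'"
  shows "mrank (hcat A B) = mrank A \<longleftrightarrow> (*\<^sub>v) B ` carrier_vec nc' \<subseteq> (*\<^sub>v) A ` carrier_vec nc"
proof -
  interpret V: vec_space "TYPE(real)" n .
  have range_eq: "(*\<^sub>v) M ` carrier_vec k = V.span (set (cols M))" if "M \<in> carrier_mat n k" for M k
    using V.col_space_eq[OF that] that unfolding V.col_space_def by auto
  have "mrank (hcat A B) = mrank A \<longleftrightarrow> set (cols B) \<subseteq> V.span (set (cols A))"
    using V.rank_hcat_eq_iff[OF A B] A B hcat_carrier[OF A B] by (simp add: mrank_def)
  also have "\<dots> \<longleftrightarrow> V.span (set (cols B)) \<subseteq> V.span (set (cols A))"
    using V.span_subsetI V.in_own_span A B cols_dim by (metis carrier_matD(1) subset_trans)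
  finally show ?thesis using range_eq[OF A] range_eq[OF B] by simp
qed

section \<open>The score in terms of the rows of the embeddings\<close>

lemma Sperm_carrier: "Sperm P \<in> carrier_mat (P * P) (P * P)"
  unfolding Sperm_def by simp

lemma index_mult_Sperm_vec:
  assumes x: "x \<in> carrier_vec (P * P)" and a: "a < P * P"
  shows "(Sperm P *\<^sub>v x) $ a = x $ (a div P + a mod P * P)"
proof -
  have P: "P > 0" using a by (cases P) auto
  have lt: "a div P < P" using a by (simp add: less_mult_imp_div_less)
  have entry: "(\<exists>i<P. \<exists>j<P. a = i * P + j \<and> b = j * P + i) \<longleftrightarrow> b = a div P + a mod P * P" for b
  proof
    assume "\<exists>i<P. \<exists>j<P. a = i * P + j \<and> b = j * P + i"
    then show "b = a div P + a mod P * P" by auto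
  next
    assume "b = a div P + a mod P * P"
    then show "\<exists>i<P. \<exists>j<P. a = i * P + j \<and> b = j * P + i"
      using P lt by (intro exI[of _ "a div P"] conjI exI[of _ "a mod P"]) auto
  qed
  have b_lt: "a div P + a mod P * P < P * P"
    using P lt by (simp add: add_mult_less_mult)
  have "(Sperm P *\<^sub>v x) $ a
      = (\<Sum>b\<in>{0..<P * P}. (if b = a div P + a mod P * P then 1 else 0) * x $ b)"
    using a x by (simp add: Sperm_def entry scalar_prod_def)
  also have "\<dots> = x $ (a div P + a mod P * P)"
    using b_lt by (simp add: if_distrib[of "\<lambda>c. c * _"] cong: if_cong)
  finally show ?thesis .
qed

lemma Sperm_involution:
  assumes x: "x \<in> carrier_vec (P * P)"
  shows "Sperm P *\<^sub>v (Sperm P *\<^sub>v x) = x"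
proof (rule eq_vecI)
  fix a assume "a < dim_vec x"
  then have a: "a < P * P" using x by simp
  then have P: "P > 0" by (cases P) auto
  have lt: "a div P < P" using a by (simp add: less_mult_imp_div_less)
  have "Sperm P *\<^sub>v x \<in> carrier_vec (P * P)" using mult_mat_vec_carrier[OF Sperm_carrier x] .
  then show "(Sperm P *\<^sub>v (Sperm P *\<^sub>v x)) $ a = x $ a"
    using index_mult_Sperm_vec[OF _ a] index_mult_Sperm_vec[OF x add_mult_less_mult[OF lt]] P lt
    by simp
qed (use x Sperm_carrier in auto)

lemma W2T_carrier [simp]: "W2T P W \<in> carrier_mat (P * P) P"
  unfolding W2T_def by simp

lemma Sperm_W2T_carrier [simp]: "Sperm P * W2T P W \<in> carrier_mat (P * P) P"
  using Sperm_carrier W2T_carrier by (rule mult_carrier_mat)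

text \<open>\<open>emb_row P K r d\<close> is the \<open>d\<close>-th row of \<open>r\<close> viewed as a \<open>K \<times> P\<close> matrix, i.e. the vector
  \<open>(col P D r m d)\<^sub>m\<^sub><\<^sub>P\<close> for \<open>K = D div P\<close>.\<close>

definition emb_row :: "nat \<Rightarrow> nat \<Rightarrow> (nat \<Rightarrow> real) \<Rightarrow> nat \<Rightarrow> real vec" where
  "emb_row P K r d = vec P (\<lambda>m. r (m * K + d))"

lemma emb_row_carrier [simp]: "emb_row P K r d \<in> carrier_vec P"
  unfolding emb_row_def by simp

text \<open>\<open>kron_pairing P K h t x\<close> is \<open>\<Sum>\<^sub>d \<langle>t\<^sub>d \<otimes> h\<^sub>d, x d\<rangle>\<close>, where \<open>h\<^sub>d, t\<^sub>d\<close> are the rows of \<open>h, t\<close>.\<close>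

definition kron_pairing ::
    "nat \<Rightarrow> nat \<Rightarrow> (nat \<Rightarrow> real) \<Rightarrow> (nat \<Rightarrow> real) \<Rightarrow> (nat \<Rightarrow> real vec) \<Rightarrow> real" where
  "kron_pairing P K h t x = (\<Sum>d<K. \<Sum>l<P. \<Sum>n<P. h (l * K + d) * t (n * K + d) * x d $ (l + n * P))"

lemma index_mult_W2T_emb_row:
  assumes "l < P" and "n < P"
  shows "(W2T P W *\<^sub>v emb_row P K r d) $ (l + n * P) = (\<Sum>m<P. W l m n * r (m * K + d))"
  using assms add_mult_less_mult[OF assms]
  by (simp add: W2T_def emb_row_def scalar_prod_def lessThan_atLeast0)

lemma index_mult_Sperm_W2T_emb_row:
  assumes "l < P" and "n < P"
  shows "((Sperm P * W2T P W) *\<^sub>v emb_row P K r d) $ (l + n * P) = (\<Sum>m<P. W n m l * r (m * K + d))"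
proof -
  have "(Sperm P * W2T P W) *\<^sub>v emb_row P K r d = Sperm P *\<^sub>v (W2T P W *\<^sub>v emb_row P K r d)"
    by (rule assoc_mult_mat_vec[OF Sperm_carrier W2T_carrier emb_row_carrier])
  then show ?thesis
    using assms index_mult_Sperm_vec[OF _ add_mult_less_mult[OF assms]]
      mult_mat_vec_carrier[OF W2T_carrier emb_row_carrier]
      index_mult_W2T_emb_row[OF assms(2,1)]
    by simp
qed

lemma tri_swap: "tri K a b c = tri K c b a"
  unfolding tri_def by (simp add: mult_ac)

lemma sum_tri_eq_kron_pairing:
  "(\<Sum>l<P. \<Sum>m<P. \<Sum>n<P. C l m n * tri K (\<lambda>d. h (l * K + d)) (\<lambda>d. r (m * K + d)) (\<lambda>d. t (n * K + d)))
     = (\<Sum>d<K. \<Sum>l<P. \<Sum>n<P. h (l * K + d) * t (n * K + d) * (\<Sum>m<P. C l m n * r (m * K + d)))"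
    (is "?lhs = ?rhs")
proof -
  let ?c = "\<lambda>l m n d. C l m n * (h (l * K + d) * r (m * K + d) * t (n * K + d))"
  have "?rhs = (\<Sum>d<K. \<Sum>l<P. \<Sum>n<P. \<Sum>m<P. ?c l m n d)"
    by (simp add: sum_distrib_left mult_ac)
  also have "\<dots> = (\<Sum>l<P. \<Sum>d<K. \<Sum>n<P. \<Sum>m<P. ?c l m n d)"
    by (rule sum.swap)
  also have "\<dots> = (\<Sum>l<P. \<Sum>n<P. \<Sum>d<K. \<Sum>m<P. ?c l m n d)"
    by (rule sum.cong[OF refl], rule sum.swap)
  also have "\<dots> = (\<Sum>l<P. \<Sum>n<P. \<Sum>m<P. \<Sum>d<K. ?c l m n d)"
    by (rule sum.cong[OF refl], rule sum.cong[OF refl], rule sum.swap)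
  also have "\<dots> = (\<Sum>l<P. \<Sum>m<P. \<Sum>n<P. \<Sum>d<K. ?c l m n d)"
    by (rule sum.cong[OF refl], rule sum.swap)
  also have "\<dots> = ?lhs"
    by (simp add: tri_def sum_distrib_left)
  finally show ?thesis ..
qed

lemma score_eq_kron_pairing:
  "score P D W h r t = kron_pairing P (D div P) h t (\<lambda>d. W2T P W *\<^sub>v emb_row P (D div P) r d)"
  unfolding score_def col_def sum_tri_eq_kron_pairing kron_pairing_def
  by (intro sum.cong refl) (simp add: index_mult_W2T_emb_row)

lemma score_swap_eq_kron_pairing:
  "score P D W t r h
     = kron_pairing P (D div P) h t (\<lambda>d. (Sperm P * W2T P W) *\<^sub>v emb_row P (D div P) r d)"
proof -
  let ?K = "D div P"
  let ?c = "\<lambda>l m n. W n m l * tri ?K (col P D h l) (col P D r m) (col P D t n)"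
  have "score P D W t r h = (\<Sum>n<P. \<Sum>m<P. \<Sum>l<P. ?c l m n)"
    unfolding score_def by (subst tri_swap) simp
  also have "\<dots> = (\<Sum>m<P. \<Sum>n<P. \<Sum>l<P. ?c l m n)"
    by (rule sum.swap)
  also have "\<dots> = (\<Sum>m<P. \<Sum>l<P. \<Sum>n<P. ?c l m n)"
    by (rule sum.cong[OF refl], rule sum.swap)
  also have "\<dots> = (\<Sum>l<P. \<Sum>m<P. \<Sum>n<P. ?c l m n)"
    by (rule sum.swap)
  also have "\<dots> = (\<Sum>d<?K. \<Sum>l<P. \<Sum>n<P.
      h (l * ?K + d) * t (n * ?K + d) * (\<Sum>m<P. W n m l * r (m * ?K + d)))"
    unfolding col_def by (rule sum_tri_eq_kron_pairing)
  also have "\<dots> = kron_pairing P ?K h t (\<lambda>d. (Sperm P * W2T P W) *\<^sub>v emb_row P ?K r d)"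
    unfolding kron_pairing_def
    by (intro sum.cong refl) (simp add: index_mult_Sperm_W2T_emb_row)
  finally show ?thesis .
qed

lemma kron_pairing_uminus:
  assumes "\<And>d. d < K \<Longrightarrow> x d \<in> carrier_vec (P * P)"
  shows "kron_pairing P K h t (\<lambda>d. - x d) = - kron_pairing P K h t x"
  unfolding kron_pairing_def sum_negf[symmetric]
  using assms[THEN carrier_vecD] by (intro sum.cong refl) (simp add: add_mult_less_mult)

lemma kron_pairing_at_indicators:
  assumes d: "d < K" and "l < P" and "n < P"
  shows "kron_pairing P K (\<lambda>j. if j = l * K + d then 1 else 0) (\<lambda>j. if j = n * K + d then 1 else 0) x
    = x d $ (l + n * P)"
proof -
  have "kron_pairing P K (\<lambda>j. if j = l * K + d then 1 else 0) (\<lambda>j. if j = n * K + d then 1 else 0) x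
     = (\<Sum>d'<K. \<Sum>l'<P. \<Sum>n'<P.
          if n' = n then if l' = l then if d' = d then x d' $ (l' + n' * P) else 0 else 0 else 0)"
    unfolding kron_pairing_def by (intro sum.cong refl) (auto simp: mult_add_eq_mult_add_iff[OF d])
  also have "\<dots> = x d $ (l + n * P)" using assms by simp
  finally show ?thesis .
qed

lemma kron_pairing_eq_iff:
  assumes x: "\<And>d. d < K \<Longrightarrow> x d \<in> carrier_vec (P * P)"
    and y: "\<And>d. d < K \<Longrightarrow> y d \<in> carrier_vec (P * P)"
  shows "(\<forall>h t. kron_pairing P K h t x = kron_pairing P K h t y) \<longleftrightarrow> (\<forall>d<K. x d = y d)"
proof
  assume same: "\<forall>h t. kron_pairing P K h t x = kron_pairing P K h t y"
  show "\<forall>d<K. x d = y d"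
  proof (intro allI impI eq_vecI)
    fix d i assume d: "d < K" and "i < dim_vec (y d)"
    then have i: "i < P * P" using y[OF d] by simp
    then have P: "P > 0" by (cases P) auto
    have lt: "i mod P < P" "i div P < P" using P i by (auto simp: less_mult_imp_div_less)
    show "x d $ i = y d $ i"
      using same kron_pairing_at_indicators[OF d lt, of x] kron_pairing_at_indicators[OF d lt, of y]
      by (simp add: mod_div_mult_eq)
  qed (simp add: x[THEN carrier_vecD] y[THEN carrier_vecD])
qed (simp add: kron_pairing_def)

lemma score_swap_iff:
  "(\<forall>h t. score P D W h r1 t = score P D W t r2 h) \<longleftrightarrow>
     (\<forall>d<D div P. W2T P W *\<^sub>v emb_row P (D div P) r1 d
                  = (Sperm P * W2T P W) *\<^sub>v emb_row P (D div P) r2 d)"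
proof -
  let ?x = "\<lambda>d. W2T P W *\<^sub>v emb_row P (D div P) r1 d"
  let ?y = "\<lambda>d. (Sperm P * W2T P W) *\<^sub>v emb_row P (D div P) r2 d"
  have x: "?x d \<in> carrier_vec (P * P)" and y: "?y d \<in> carrier_vec (P * P)" for d
    by (simp_all add: mult_mat_vec_carrier[OF _ emb_row_carrier])
  have "(\<forall>h t. score P D W h r1 t = score P D W t r2 h) \<longleftrightarrow>
      (\<forall>h t. kron_pairing P (D div P) h t ?x = kron_pairing P (D div P) h t ?y)"
    by (simp only: score_eq_kron_pairing[of P D W _ r1] score_swap_eq_kron_pairing[of P D W _ r2])
  also have "\<dots> \<longleftrightarrow> (\<forall>d<D div P. ?x d = ?y d)"
    using kron_pairing_eq_iff[OF x y] .
  finally show ?thesis .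
qed

lemma score_antiswap_iff:
  "(\<forall>h t. score P D W h r1 t = - score P D W t r2 h) \<longleftrightarrow>
     (\<forall>d<D div P. W2T P W *\<^sub>v emb_row P (D div P) r1 d
                  = - ((Sperm P * W2T P W) *\<^sub>v emb_row P (D div P) r2 d))"
proof -
  let ?x = "\<lambda>d. W2T P W *\<^sub>v emb_row P (D div P) r1 d"
  let ?y = "\<lambda>d. (Sperm P * W2T P W) *\<^sub>v emb_row P (D div P) r2 d"
  have x: "?x d \<in> carrier_vec (P * P)" and y: "?y d \<in> carrier_vec (P * P)" for d
    by (simp_all add: mult_mat_vec_carrier[OF _ emb_row_carrier])
  have "(\<forall>h t. score P D W h r1 t = - score P D W t r2 h) \<longleftrightarrow>
      (\<forall>h t. kron_pairing P (D div P) h t ?x = kron_pairing P (D div P) h t (\<lambda>d. - ?y d))"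
    by (simp only: score_eq_kron_pairing[of P D W _ r1] score_swap_eq_kron_pairing[of P D W _ r2]
        kron_pairing_uminus[OF y])
  also have "\<dots> \<longleftrightarrow> (\<forall>d<D div P. ?x d = - ?y d)"
    using kron_pairing_eq_iff[OF x uminus_carrier_vec[THEN iffD2, OF y]] .
  finally show ?thesis .
qed

lemma emb_row_of_rows:
  assumes "d < K" and "v d \<in> carrier_vec P"
  shows "emb_row P K (\<lambda>j. v (j mod K) $ (j div K)) d = v d"
  using assms by (intro eq_vecI) (auto simp: emb_row_def)

lemma ex_nonzero_iff_ex_nonzero_emb_row:
  "(\<exists>j<P * K. r j \<noteq> 0) \<longleftrightarrow> (\<exists>d<K. emb_row P K r d \<noteq> 0\<^sub>v P)"
proof
  assume "\<exists>j<P * K. r j \<noteq> 0"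
  then obtain j where j: "j < P * K" "r j \<noteq> 0" by blast
  then have K: "K > 0" by (cases K) auto
  have "j div K < P" using j(1) by (simp add: less_mult_imp_div_less)
  then have "emb_row P K r (j mod K) $ (j div K) \<noteq> 0"
    using j(2) by (simp add: emb_row_def mult.commute)
  then have "emb_row P K r (j mod K) \<noteq> 0\<^sub>v P"
    using \<open>j div K < P\<close> by auto
  then show "\<exists>d<K. emb_row P K r d \<noteq> 0\<^sub>v P"
    using K by auto
next
  assume "\<exists>d<K. emb_row P K r d \<noteq> 0\<^sub>v P"
  then obtain d m where "d < K" "m < P" "r (m * K + d) \<noteq> 0"
    by (auto simp: emb_row_def vec_eq_iff)
  moreover have "d + m * K < P * K"
    using \<open>d < K\<close> \<open>m < P\<close> by (rule add_mult_less_mult)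
  ultimately show "\<exists>j<P * K. r j \<noteq> 0"
    by (intro exI[of _ "m * K + d"]) (simp add: add.commute)
qed

lemma ex_nonzero_emb_rows_iff:
  assumes K: "K > 0"
  shows "(\<exists>r. (\<exists>j<P * K. r j \<noteq> 0) \<and> (\<forall>d<K. Q (emb_row P K r d)))
     \<longleftrightarrow> (\<exists>v\<in>carrier_vec P. v \<noteq> 0\<^sub>v P \<and> Q v)"
proof
  assume "\<exists>r. (\<exists>j<P * K. r j \<noteq> 0) \<and> (\<forall>d<K. Q (emb_row P K r d))"
  then show "\<exists>v\<in>carrier_vec P. v \<noteq> 0\<^sub>v P \<and> Q v"
    using ex_nonzero_iff_ex_nonzero_emb_row emb_row_carrier by blast
next
  assume "\<exists>v\<in>carrier_vec P. v \<noteq> 0\<^sub>v P \<and> Q v"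
  then obtain v where v: "v \<in> carrier_vec P" "v \<noteq> 0\<^sub>v P" "Q v" by blast
  define r where "r = (\<lambda>j. v $ (j div K))"
  have rows: "emb_row P K r d = v" if "d < K" for d
    using emb_row_of_rows[of d K "\<lambda>_. v" P] that v(1) by (simp add: r_def)
  then have "\<exists>j<P * K. r j \<noteq> 0"
    using ex_nonzero_iff_ex_nonzero_emb_row K v(2) by blast
  then show "\<exists>r. (\<exists>j<P * K. r j \<noteq> 0) \<and> (\<forall>d<K. Q (emb_row P K r d))"
    using rows v(3) by auto
qed

lemma all_ex_emb_rows_iff:
  assumes K: "K > 0"
  shows "(\<forall>r1. \<exists>r2. \<forall>d<K. R (emb_row P K r1 d) (emb_row P K r2 d))
     \<longleftrightarrow> (\<forall>v\<in>carrier_vec P. \<exists>w\<in>carrier_vec P. R v w)"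
proof
  assume rows: "\<forall>r1. \<exists>r2. \<forall>d<K. R (emb_row P K r1 d) (emb_row P K r2 d)"
  show "\<forall>v\<in>carrier_vec P. \<exists>w\<in>carrier_vec P. R v w"
  proof
    fix v :: "real vec" assume v: "v \<in> carrier_vec P"
    obtain r2 where "\<forall>d<K. R (emb_row P K (\<lambda>j. v $ (j div K)) d) (emb_row P K r2 d)"
      using rows by blast
    then have "R (emb_row P K (\<lambda>j. v $ (j div K)) 0) (emb_row P K r2 0)"
      using K by blast
    moreover have "emb_row P K (\<lambda>j. v $ (j div K)) 0 = v"
      using emb_row_of_rows[of 0 K "\<lambda>_. v" P] K v by simp
    ultimately show "\<exists>w\<in>carrier_vec P. R v w"
      using emb_row_carrier by auto
  qed
next
  assume "\<forall>v\<in>carrier_vec P. \<exists>w\<in>carrier_vec P. R v w"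
  then obtain f where f: "\<forall>v\<in>carrier_vec P. f v \<in> carrier_vec P \<and> R v (f v)"
    using bchoice[of "carrier_vec P" "\<lambda>v w. w \<in> carrier_vec P \<and> R v w"] by blast
  show "\<forall>r1. \<exists>r2. \<forall>d<K. R (emb_row P K r1 d) (emb_row P K r2 d)"
  proof
    fix r1
    define r2 where "r2 = (\<lambda>j. f (emb_row P K r1 (j mod K)) $ (j div K))"
    have "emb_row P K r2 d = f (emb_row P K r1 d)" if "d < K" for d
      using emb_row_of_rows[of d K "\<lambda>d. f (emb_row P K r1 d)" P] that f
      by (simp add: r2_def)
    then show "\<exists>r2. \<forall>d<K. R (emb_row P K r1 d) (emb_row P K r2 d)"
      using f emb_row_carrier by (intro exI[of _ r2]) simp
  qed
qed

lemma ex_nonzero_kernel_emb_rows_iff_mrank: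
  assumes "M \<in> carrier_mat n P" and "K > 0"
  shows "(\<exists>r. (\<exists>j<P * K. r j \<noteq> 0) \<and> (\<forall>d<K. M *\<^sub>v emb_row P K r d = 0\<^sub>v n)) \<longleftrightarrow> mrank M < P"
  using ex_nonzero_emb_rows_iff[OF assms(2), of P "\<lambda>v. M *\<^sub>v v = 0\<^sub>v n"]
    mrank_lt_iff_nontrivial_kernel[of M] assms(1)
  by simp

section \<open>Symmetry, antisymmetry and inversion\<close>

lemma symmetry_iff_rank:
  assumes "D > 0" and "P dvd D"
  shows "(\<exists>r. (\<exists>d<D. r d \<noteq> 0) \<and> (\<forall>h t. score P D W h r t = score P D W t r h))
     \<longleftrightarrow> mrank (W2T P W - Sperm P * W2T P W) < P"
proof -
  obtain K where D: "D = P * K" and K: "K > 0" and KD: "D div P = K"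
    using pos_dvd_quotientE[OF assms] .
  let ?M = "W2T P W - Sperm P * W2T P W"
  have "(\<forall>h t. score P D W h r t = score P D W t r h)
      \<longleftrightarrow> (\<forall>d<K. ?M *\<^sub>v emb_row P K r d = 0\<^sub>v (P * P))" for r
    using score_swap_iff[of P D W r r] unfolding KD
    by (simp add: mult_minus_mat_vec_eq_zero_iff[OF W2T_carrier Sperm_W2T_carrier emb_row_carrier])
  then show ?thesis
    using ex_nonzero_kernel_emb_rows_iff_mrank[OF minus_carrier_mat[OF Sperm_W2T_carrier] K]
    unfolding D by simp
qed

lemma antisymmetry_iff_rank:
  assumes "D > 0" and "P dvd D"
  shows "(\<exists>r. (\<exists>d<D. r d \<noteq> 0) \<and> (\<forall>h t. score P D W h r t = - score P D W t r h))
     \<longleftrightarrow> mrank (W2T P W + Sperm P * W2T P W) < P"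
proof -
  obtain K where D: "D = P * K" and K: "K > 0" and KD: "D div P = K"
    using pos_dvd_quotientE[OF assms] .
  let ?M = "W2T P W + Sperm P * W2T P W"
  have "(\<forall>h t. score P D W h r t = - score P D W t r h)
      \<longleftrightarrow> (\<forall>d<K. ?M *\<^sub>v emb_row P K r d = 0\<^sub>v (P * P))" for r
    using score_antiswap_iff[of P D W r r] unfolding KD
    by (simp add: mult_add_mat_vec_eq_zero_iff[OF W2T_carrier Sperm_W2T_carrier emb_row_carrier])
  then show ?thesis
    using ex_nonzero_kernel_emb_rows_iff_mrank[OF add_carrier_mat[OF Sperm_W2T_carrier] K]
    unfolding D by simp
qed

lemma inverse_iff_rank:
  assumes "D > 0" and "P dvd D"
  shows "(\<forall>r1. \<exists>r2. \<forall>h t. score P D W h r1 t = score P D W t r2 h)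
     \<longleftrightarrow> mrank (W2T P W) = mrank (hcat (W2T P W) (Sperm P * W2T P W))"
proof -
  obtain K where K: "K > 0" and KD: "D div P = K"
    using pos_dvd_quotientE[OF assms] .
  let ?A = "W2T P W" and ?SA = "Sperm P * W2T P W"
  have "(\<forall>r1. \<exists>r2. \<forall>h t. score P D W h r1 t = score P D W t r2 h)
      \<longleftrightarrow> (\<forall>v\<in>carrier_vec P. \<exists>w\<in>carrier_vec P. ?A *\<^sub>v v = ?SA *\<^sub>v w)"
    unfolding score_swap_iff KD by (rule all_ex_emb_rows_iff[OF K])
  also have "\<dots> \<longleftrightarrow> (*\<^sub>v) ?A ` carrier_vec P \<subseteq> (*\<^sub>v) ?SA ` carrier_vec P"
    by blast
  also have "\<dots> \<longleftrightarrow> (*\<^sub>v) ?SA ` carrier_vec P \<subseteq> (*\<^sub>v) ?A ` carrier_vec P"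
    unfolding mult_mat_vec_image_mult[OF Sperm_carrier W2T_carrier]
    by (rule involution_image_subset_iff) (auto intro!: Sperm_involution mult_mat_vec_carrier)
  also have "\<dots> \<longleftrightarrow> mrank (hcat ?A ?SA) = mrank ?A"
    using mrank_hcat_eq_iff_range_subset[OF W2T_carrier Sperm_W2T_carrier] by simp
  finally show ?thesis by auto
qed

theorem theorem1:
  fixes P D :: nat and W :: "nat \<Rightarrow> nat \<Rightarrow> nat \<Rightarrow> real"
  assumes "P > 0" and "D > 0" and "P dvd D"
  shows "((\<exists>r :: nat \<Rightarrow> real. (\<exists>d<D. r d \<noteq> 0) \<and>
              (\<forall>h t. score P D W h r t = score P D W t r h))
           \<longleftrightarrow> mrank (W2T P W - Sperm P * W2T P W) < P)
       \<and> ((\<exists>r :: nat \<Rightarrow> real. (\<exists>d<D. r d \<noteq> 0) \<and>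
              (\<forall>h t. score P D W h r t = - score P D W t r h))
           \<longleftrightarrow> mrank (W2T P W + Sperm P * W2T P W) < P)
       \<and> ((\<forall>r1 :: nat \<Rightarrow> real. \<exists>r2 :: nat \<Rightarrow> real.
              \<forall>h t. score P D W h r1 t = score P D W t r2 h)
           \<longleftrightarrow> mrank (W2T P W) = mrank (hcat (W2T P W) (Sperm P * W2T P W)))"
  using symmetry_iff_rank[OF assms(2,3)] antisymmetry_iff_rank[OF assms(2,3)]
    inverse_iff_rank[OF assms(2,3)]
  by blast

end
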